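(* Let $0<a<1/2$, $0\le c\le\sqrt2$, $A\in\{0,1\}$, and let $J,K,M\ge0$ be constants. Then the integral $$\int_0^\infty\int_{-\infty}^\infty s^J\sqrt{a^2+v^2}^{\,-M}\sqrt{(s^2+1/2-a)^2+v^2}^{\,-K}\sqrt{(s^2+1-a-sc)^2+v^2}^{\,-A}\,dv\,ds$$ converges provided $J-2K-2A<-1$ and $J-2K-2A+1-2M<-2$. *)

theory Defs
  imports "HOL-Analysis.Analysis"
begin

end

(*
  Dominate the integrand on (0,oo) x R by a product g(s) h(v). The three square roots are
  bounded below by positive multiples of sqrt(1 + v^2), sqrt((1 + s^2)^2 + v^2) and again
  sqrt((1 + s^2)^2 + v^2); for the last one this is s^2 + 1 - a - s c >= (1 - 2a)/4 (1 + s^2),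
  which needs c <= sqrt 2. Splitting the power K + A of sqrt((1 + s^2)^2 + v^2) into alpha
  powers of 1 + s^2 and K + A - alpha powers of sqrt(1 + v^2) gives g(s) = s^J (1 + s^2)^(-alpha)
  and h(v) = sqrt(1 + v^2)^(-(M + K + A - alpha)). The two exponent conditions are exactly what
  is needed to pick alpha in ((J + 1)/2, min(K + A, M + K + A - 1)), which makes g integrable
  on (0,oo) and h integrable on R.
*)
theory Submission
  imports Defs "HOL-Analysis.Analysis"
begin

lemma set_integrable_powr_at_top:
  fixes p :: real
  assumes "p < -1"
  shows "set_integrable lborel {1..} (\<lambda>x. x powr p)"
proof -
  have "(\<lambda>x::real. x powr p) integrable_on {1..}"
    using has_integral_powr_to_inf[OF assms, of 1] unfolding integrable_on_def by auto
  then have "(\<lambda>x::real. x powr p) absolutely_integrable_on {1..}"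
    by (rule nonnegative_absolutely_integrable_1) auto
  then show ?thesis
    by (simp add: absolutely_integrable_on_def set_integrable_def integrable_completion)
qed

lemma set_integrable_powr_mult_one_plus_square_powr:
  fixes J \<alpha> :: real
  assumes "0 \<le> J" "J - 2 * \<alpha> < -1"
  shows "set_integrable lborel {0<..} (\<lambda>s. s powr J * (1 + s\<^sup>2) powr (-\<alpha>))"
proof -
  have "0 \<le> \<alpha>"
    using assms by linarith
  have "set_integrable lborel {0<..1} (\<lambda>s. s powr J * (1 + s\<^sup>2) powr (-\<alpha>))"
  proof (rule set_integrable_bound[where f = "\<lambda>_. 1::real"])
    show "set_integrable lborel {0<..1::real} (\<lambda>_. 1::real)"
      by (simp add: set_integrable_def)
    show "AE s in lborel. s \<in> {0<..1} \<longrightarrow> norm (s powr J * (1 + s\<^sup>2) powr (-\<alpha>)) \<le> norm (1::real)"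
    proof (intro AE_I2 impI)
      fix s :: real
      assume "s \<in> {0<..1}"
      then have "s powr J \<le> 1"
        using assms by (intro powr_le1) auto
      moreover have "(1 + s\<^sup>2) powr (-\<alpha>) \<le> 1 powr (-\<alpha>)"
        using \<open>0 \<le> \<alpha>\<close> by (intro powr_mono2') auto
      ultimately show "norm (s powr J * (1 + s\<^sup>2) powr (-\<alpha>)) \<le> norm (1::real)"
        by (simp add: mult_le_one)
    qed
  qed (simp add: set_borel_measurable_def)
  moreover have "set_integrable lborel {1..} (\<lambda>s. s powr J * (1 + s\<^sup>2) powr (-\<alpha>))"
  proof (rule set_integrable_bound[where f = "\<lambda>s. s powr (J - 2 * \<alpha>)"])
    show "set_integrable lborel {1..} (\<lambda>s. s powr (J - 2 * \<alpha>))"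
      using assms(2) by (rule set_integrable_powr_at_top)
    show "AE s in lborel. s \<in> {1..} \<longrightarrow> norm (s powr J * (1 + s\<^sup>2) powr (-\<alpha>)) \<le> norm (s powr (J - 2 * \<alpha>))"
    proof (intro AE_I2 impI)
      fix s :: real
      assume "s \<in> {1..}"
      then have "(1 + s\<^sup>2) powr (-\<alpha>) \<le> (s\<^sup>2) powr (-\<alpha>)"
        using \<open>0 \<le> \<alpha>\<close> by (intro powr_mono2') auto
      also have "\<dots> = s powr (- 2 * \<alpha>)"
        using \<open>s \<in> {1..}\<close> by (simp add: powr_powr flip: powr_numeral)
      finally have "s powr J * (1 + s\<^sup>2) powr (-\<alpha>) \<le> s powr J * s powr (- 2 * \<alpha>)"
        by (simp add: mult_left_mono)
      then show "norm (s powr J * (1 + s\<^sup>2) powr (-\<alpha>)) \<le> norm (s powr (J - 2 * \<alpha>))"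
        by (simp flip: powr_add)
    qed
  qed (simp add: set_borel_measurable_def)
  moreover have "{0<..1} \<union> {1..} = {0::real<..}"
    by auto
  ultimately show ?thesis
    using set_integrable_Un[of lborel "{0<..1}" _ "{1..}"] by fastforce
qed

lemma integrable_even_real:
  fixes f :: "real \<Rightarrow> 'a::{banach, second_countable_topology}"
  assumes even: "\<And>x. f (-x) = f x" and "set_integrable lborel {0<..} f"
  shows "integrable lborel f"
proof -
  have pos: "integrable lborel (\<lambda>x. indicator {0<..} x *\<^sub>R f x)"
    using assms(2) by (simp add: set_integrable_def)
  have "integrable lborel (\<lambda>x. indicator {0<..} (-x) *\<^sub>R f (-x))"
    using pos lborel_integrable_real_affine_iff[of "-1" "\<lambda>x. indicator {0<..} x *\<^sub>R f x" 0]
    by simp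
  then have neg: "integrable lborel (\<lambda>x. indicator {0<..} (-x) *\<^sub>R f x)"
    by (simp only: even)
  have zero: "integrable lborel (\<lambda>x. indicator {0} x *\<^sub>R f 0)"
    by (intro integrable_scaleR_left integrable_real_indicator) auto
  have "f = (\<lambda>x. indicator {0<..} x *\<^sub>R f x + indicator {0<..} (-x) *\<^sub>R f x + indicator {0} x *\<^sub>R f 0)"
  proof
    fix x :: real
    show "f x = indicator {0<..} x *\<^sub>R f x + indicator {0<..} (-x) *\<^sub>R f x + indicator {0} x *\<^sub>R f 0"
      by (cases x "0::real" rule: linorder_cases) (auto simp: indicator_def)
  qed
  then show ?thesis
    by (rule ssubst) (intro Bochner_Integration.integrable_add pos neg zero)
qed

lemma integrable_sqrt_one_plus_square_powr:
  fixes \<beta> :: real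
  assumes "1 < \<beta>"
  shows "integrable lborel (\<lambda>v. sqrt (1 + v\<^sup>2) powr (-\<beta>))"
proof (rule integrable_even_real)
  have "set_integrable lborel {0<..} (\<lambda>v. v powr 0 * (1 + v\<^sup>2) powr (-(\<beta>/2)))"
    using assms by (intro set_integrable_powr_mult_one_plus_square_powr) auto
  moreover have "set_integrable lborel {0<..} (\<lambda>v. v powr 0 * (1 + v\<^sup>2) powr (-(\<beta>/2)))
      = set_integrable lborel {0<..} (\<lambda>v. sqrt (1 + v\<^sup>2) powr (-\<beta>))"
    by (rule set_integrable_cong) (simp_all add: powr_powr flip: powr_half_sqrt)
  ultimately show "set_integrable lborel {0<..} (\<lambda>v. sqrt (1 + v\<^sup>2) powr (-\<beta>))"
    by blast
qed simp

lemma (in pair_sigma_finite) integrable_mult_fst_snd: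
  fixes g :: "'a \<Rightarrow> real" and h :: "'b \<Rightarrow> real"
  assumes "integrable M1 g" "integrable M2 h"
  shows "integrable (M1 \<Otimes>\<^sub>M M2) (\<lambda>z. g (fst z) * h (snd z))"
proof (rule Fubini_integrable)
  have [measurable]: "g \<in> borel_measurable M1" "h \<in> borel_measurable M2"
    using assms by auto
  show "(\<lambda>z. g (fst z) * h (snd z)) \<in> borel_measurable (M1 \<Otimes>\<^sub>M M2)"
    by measurable
  have "integrable M1 (\<lambda>x. norm (g x) * (\<integral>y. norm (h y) \<partial>M2))"
    using assms by (intro integrable_mult_left) auto
  then show "integrable M1 (\<lambda>x. \<integral>y. norm (g (fst (x, y)) * h (snd (x, y))) \<partial>M2)"
    by (simp add: abs_mult)
  show "AE x in M1. integrable M2 (\<lambda>y. g (fst (x, y)) * h (snd (x, y)))"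
    using assms by (intro AE_I2) auto
qed

lemma set_integrable_lborel_pair_mult:
  fixes g h :: "real \<Rightarrow> real"
  assumes "set_integrable lborel A g" "set_integrable lborel B h"
  shows "set_integrable lborel (A \<times> B) (\<lambda>(x, y). g x * h y)"
proof -
  have "integrable (lborel \<Otimes>\<^sub>M lborel)
      (\<lambda>z. (indicator A (fst z) * g (fst z)) * (indicator B (snd z) * h (snd z)))"
    using assms by (intro lborel_pair.integrable_mult_fst_snd) (simp_all add: set_integrable_def)
  moreover have "(\<lambda>z. (indicator A (fst z) * g (fst z)) * (indicator B (snd z) * h (snd z)))
      = (\<lambda>z. indicator (A \<times> B) z *\<^sub>R (case z of (x, y) \<Rightarrow> g x * h y))"
    by (auto simp: indicator_def)
  ultimately show ?thesis
    unfolding set_integrable_def lborel_prod by simp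
qed

lemma mult_sqrt_sum_squares_le:
  fixes d x y v :: real
  assumes "0 \<le> d" "d \<le> 1" "0 \<le> d * x" "d * x \<le> y"
  shows "d * sqrt (x\<^sup>2 + v\<^sup>2) \<le> sqrt (y\<^sup>2 + v\<^sup>2)"
proof -
  have "(d * x)\<^sup>2 \<le> y\<^sup>2"
    using assms by (intro power_mono) auto
  moreover have "d\<^sup>2 * v\<^sup>2 \<le> v\<^sup>2"
    using assms by (simp add: mult_left_le_one_le power_le_one)
  ultimately have "d\<^sup>2 * (x\<^sup>2 + v\<^sup>2) \<le> y\<^sup>2 + v\<^sup>2"
    by (simp add: algebra_simps)
  then have "sqrt (d\<^sup>2 * (x\<^sup>2 + v\<^sup>2)) \<le> sqrt (y\<^sup>2 + v\<^sup>2)"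
    by (rule real_sqrt_le_mono)
  then show ?thesis
    using assms by (simp add: real_sqrt_mult)
qed

lemma sqrt_sum_squares_powr_neg_le:
  fixes d x y v e :: real
  assumes "0 < d" "d \<le> 1" "0 < x" "d * x \<le> y" "0 \<le> e"
  shows "sqrt (y\<^sup>2 + v\<^sup>2) powr (-e) \<le> d powr (-e) * sqrt (x\<^sup>2 + v\<^sup>2) powr (-e)"
proof -
  have "0 < d * sqrt (x\<^sup>2 + v\<^sup>2)"
    using assms by (simp add: add_pos_nonneg)
  then have "sqrt (y\<^sup>2 + v\<^sup>2) powr (-e) \<le> (d * sqrt (x\<^sup>2 + v\<^sup>2)) powr (-e)"
    using assms mult_sqrt_sum_squares_le[of d x y v] by (intro powr_mono2') auto
  also have "\<dots> = d powr (-e) * sqrt (x\<^sup>2 + v\<^sup>2) powr (-e)"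
    using assms by (simp add: powr_mult)
  finally show ?thesis .
qed

lemma quadratic_lower_bound:
  fixes a c s :: real
  assumes "0 < a" "a < 1/2" "c \<le> sqrt 2" "0 \<le> s"
  shows "(1 - 2*a)/4 * (1 + s\<^sup>2) \<le> s\<^sup>2 + 1 - a - s*c"
proof -
  \<comment> \<open>\<open>?q / 4\<close> is the slack in the worst case \<open>c = sqrt 2\<close>; complete the square.\<close>
  let ?q = "(3 + 2*a) * s\<^sup>2 - 4 * sqrt 2 * s + (3 - 2*a)"
  have "(3 + 2*a) * ?q = ((3 + 2*a) * s - 2 * sqrt 2)\<^sup>2 + (1 - 4 * a\<^sup>2)"
    by (simp add: power2_eq_square algebra_simps)
  moreover have "a * a \<le> 1/2 * (1/2)"
    using assms by (intro mult_mono) auto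
  ultimately have "0 \<le> (3 + 2*a) * ?q"
    by (simp add: power2_eq_square)
  then have "0 \<le> ?q"
    using assms by (simp add: zero_le_mult_iff)
  moreover have "s * c \<le> s * sqrt 2"
    using assms by (intro mult_left_mono) auto
  moreover have "s\<^sup>2 + 1 - a - s*c - (1 - 2*a)/4 * (1 + s\<^sup>2) = ?q / 4 + (s * sqrt 2 - s * c)"
    by (simp add: field_simps power2_eq_square)
  ultimately show ?thesis
    by (smt (verit) divide_nonneg_pos)
qed

lemma powr_neg_le_mult_powr_neg:
  fixes w x y \<alpha> L :: real
  assumes "0 < x" "x \<le> w" "0 < y" "y \<le> w" "0 \<le> \<alpha>" "\<alpha> \<le> L"
  shows "w powr (-L) \<le> x powr (-\<alpha>) * y powr (\<alpha> - L)"
proof -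
  have "w powr (-L) = w powr (-\<alpha>) * w powr (\<alpha> - L)"
    by (simp flip: powr_add)
  also have "\<dots> \<le> x powr (-\<alpha>) * y powr (\<alpha> - L)"
    using assms by (intro mult_mono powr_mono2') auto
  finally show ?thesis .
qed

lemma integrand_le_product:
  fixes a c A J K M \<alpha> s v :: real
  assumes "0 < a" "a < 1/2" "c \<le> sqrt 2" "0 \<le> A" "0 \<le> K" "0 \<le> M"
    and "0 \<le> \<alpha>" "\<alpha> \<le> K + A" "0 \<le> s"
  shows "s powr J * sqrt (a\<^sup>2 + v\<^sup>2) powr (-M) * sqrt ((s\<^sup>2 + 1/2 - a)\<^sup>2 + v\<^sup>2) powr (-K)
           * sqrt ((s\<^sup>2 + 1 - a - s*c)\<^sup>2 + v\<^sup>2) powr (-A)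
         \<le> min a 1 powr (-M) * (1/2 - a) powr (-K) * ((1 - 2*a)/4) powr (-A)
           * (s powr J * (1 + s\<^sup>2) powr (-\<alpha>)) * sqrt (1 + v\<^sup>2) powr (-(M + K + A - \<alpha>))"
    (is "?F \<le> ?C * ?g * ?h")
proof -
  define V where "V = sqrt (1 + v\<^sup>2)"
  define W where "W = sqrt ((1 + s\<^sup>2)\<^sup>2 + v\<^sup>2)"
  have "0 < V"
    unfolding V_def by (simp add: add_pos_nonneg)
  have "V \<le> W"
    unfolding V_def W_def using one_le_power[of "1 + s\<^sup>2" 2] by simp
  have "1 + s\<^sup>2 \<le> W"
    unfolding W_def by (rule real_sqrt_sum_squares_ge1)
  have bound_M: "sqrt (a\<^sup>2 + v\<^sup>2) powr (-M) \<le> min a 1 powr (-M) * V powr (-M)"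
    unfolding V_def using assms by (intro sqrt_sum_squares_powr_neg_le[where x = 1, simplified]) auto
  have "(1/2 - a) * (1 + s\<^sup>2) \<le> s\<^sup>2 + 1/2 - a"
    using assms by (simp add: algebra_simps mult_left_le_one_le)
  then have bound_K: "sqrt ((s\<^sup>2 + 1/2 - a)\<^sup>2 + v\<^sup>2) powr (-K) \<le> (1/2 - a) powr (-K) * W powr (-K)"
    unfolding W_def using assms by (intro sqrt_sum_squares_powr_neg_le) (auto intro: add_pos_nonneg)
  have bound_A: "sqrt ((s\<^sup>2 + 1 - a - s*c)\<^sup>2 + v\<^sup>2) powr (-A) \<le> ((1 - 2*a)/4) powr (-A) * W powr (-A)"
    unfolding W_def using assms quadratic_lower_bound[of a c s]
    by (intro sqrt_sum_squares_powr_neg_le) (auto intro: add_pos_nonneg)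
  have "?F \<le> s powr J * (min a 1 powr (-M) * V powr (-M)) * ((1/2 - a) powr (-K) * W powr (-K))
           * (((1 - 2*a)/4) powr (-A) * W powr (-A))"
    by (intro mult_mono order_refl bound_M bound_K bound_A) simp_all
  also have "\<dots> = ?C * s powr J * V powr (-M) * W powr (-(K + A))"
    by (simp add: ac_simps flip: powr_add)
  also have "\<dots> \<le> ?C * s powr J * V powr (-M) * ((1 + s\<^sup>2) powr (-\<alpha>) * V powr (\<alpha> - (K + A)))"
    using assms \<open>0 < V\<close> \<open>V \<le> W\<close> \<open>1 + s\<^sup>2 \<le> W\<close>
    by (intro mult_left_mono powr_neg_le_mult_powr_neg) (auto intro: add_pos_nonneg)
  also have "\<dots> = ?C * ?g * V powr (-M + (\<alpha> - (K + A)))"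
    by (simp only: powr_add) (simp add: ac_simps)
  also have "\<dots> = ?C * ?g * ?h"
    unfolding V_def by (simp add: algebra_simps)
  finally show ?thesis .
qed

theorem lemma5p4:
  fixes a c A J K M :: real
  assumes "0 < a" "a < 1/2" "0 \<le> c" "c \<le> sqrt 2" "A \<in> {0, 1}"
    and "0 \<le> J" "0 \<le> K" "0 \<le> M"
    and "J - 2*K - 2*A < -1" "J - 2*K - 2*A + 1 - 2*M < -2"
  shows "set_integrable lborel ({0<..} \<times> (UNIV :: real set))
           (\<lambda>(s::real, v::real). s powr J * sqrt (a^2 + v^2) powr (-M)
              * sqrt ((s^2 + 1/2 - a)^2 + v^2) powr (-K)
              * sqrt ((s^2 + 1 - a - s*c)^2 + v^2) powr (-A))"
proof -
  let ?F = "\<lambda>(s::real, v::real). s powr J * sqrt (a^2 + v^2) powr (-M)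
              * sqrt ((s^2 + 1/2 - a)^2 + v^2) powr (-K)
              * sqrt ((s^2 + 1 - a - s*c)^2 + v^2) powr (-A)"
  have "0 \<le> A"
    using assms(5) by auto
  have "(J + 1)/2 < min (K + A) (M + K + A - 1)"
    using assms(9,10) by auto
  then obtain \<alpha> where \<alpha>: "(J + 1)/2 < \<alpha>" "\<alpha> < min (K + A) (M + K + A - 1)"
    using dense by blast
  define C where "C = min a 1 powr (-M) * (1/2 - a) powr (-K) * ((1 - 2*a)/4) powr (-A)"
  let ?G = "\<lambda>(s, v). C * (s powr J * (1 + s\<^sup>2) powr (-\<alpha>)) * sqrt (1 + v\<^sup>2) powr (-(M + K + A - \<alpha>))"
  have "set_integrable lborel {0<..} (\<lambda>s. C * (s powr J * (1 + s\<^sup>2) powr (-\<alpha>)))"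
    using \<alpha> assms(6) by (intro set_integrable_mult_right set_integrable_powr_mult_one_plus_square_powr) auto
  moreover have "set_integrable lborel UNIV (\<lambda>v. sqrt (1 + v\<^sup>2) powr (-(M + K + A - \<alpha>)))"
    using \<alpha> integrable_sqrt_one_plus_square_powr[of "M + K + A - \<alpha>"] by (simp add: set_integrable_def)
  ultimately have "set_integrable lborel ({0<..} \<times> UNIV) ?G"
    by (rule set_integrable_lborel_pair_mult)
  then show ?thesis
  proof (rule set_integrable_bound)
    show "set_borel_measurable lborel ({0<..} \<times> UNIV) ?F"
      unfolding set_borel_measurable_def lborel_prod[symmetric] by measurable
    show "AE x in lborel. x \<in> {0<..} \<times> UNIV \<longrightarrow> norm (?F x) \<le> norm (?G x)"
      using integrand_le_product[of a c A K M \<alpha>] assms \<open>0 \<le> A\<close> \<alpha>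
      by (intro AE_I2) (auto simp: C_def)
  qed
qed

end
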